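(* Let $\eta>0$ and let $\mathcal{H}$ be the Paley-Wiener space on $\mathbb{R}^d$ with parameter $\eta$ (functions in $\mathcal{L}^2(\mathbb{R}^d)$ whose Fourier transform is supported in $[-\eta,\eta]^d$), and let $f_*\in\mathcal{H}$. Let $K\ge 2$, $\gamma\in(0,1)$, and let $C_1,\dots,C_K\subseteq\mathcal{H}$ be random confidence regions such that $\mathbb{P}(f_*\in C_k)\ge 1-\gamma$ for every $k\in\{1,\dots,K\}$. For each $k$ and each $x\in\mathbb{R}^d$ let $$I_1^{(k)}(x)=\min_{f\in C_k} f(x),\qquad I_2^{(k)}(x)=\max_{f\in C_k} f(x)$$ (assumed to exist). Let $w=(w_1,\dots,w_K)\in[0,1]^K$ with $\sum_{k=1}^K w_k=1$ be fixed weights, and for each $x_0\in\mathbb{R}^d$ define the per-input majority-vote set $$\mathcal{C}(w,1/2,x_0)\doteq\Big\{y\in\mathbb{R}:\ \sum_{k=1}^K w_k\,\mathbb{I}\big(y\in[I_1^{(k)}(x_0),I_2^{(k)}(x_0)]\big)>1/2\Big\}.$$ Then the resulting band has simultaneous coverage: $$\mathbb{P}\big(\forall x_0\in\mathbb{R}^d:\ f_*(x_0)\in\mathcal{C}(w,1/2,x_0)\big)\ge 1-2\gamma.$$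
   Context: In the paper, $C_k$ is the Paley-Wiener kernel-based confidence region for the unknown regression function $f_*$ built from the $k$-th random subsample (random permutation) of an i.i.d. input-output sample, with $\gamma=\alpha+\beta$; $[I_1^{(k)}(x),I_2^{(k)}(x)]$ is the resulting confidence interval for $f_*(x)$ at query input $x$. $\mathbb{I}$ denotes the indicator function. The case of equal weights $w_k=1/K$ is the standard majority vote. *)

theory Defs
  imports "HOL-Probability.Probability"
begin

definition freq_cube :: "real \<Rightarrow> (real^'d) set" where
  "freq_cube \<eta> = {\<omega>. \<forall>i. \<bar>\<omega> $ i\<bar> \<le> \<eta>}"

text \<open>Paley-Wiener space: real-valued square-integrable functions on R^d whose
  Fourier transform is supported in [-eta,eta]^d, i.e. (continuous representatives)
  inverse Fourier transforms of L2 functions on the cube (normalising constants are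
  absorbed into g).\<close>
definition paley_wiener :: "real \<Rightarrow> ((real^'d) \<Rightarrow> real) set" where
  "paley_wiener \<eta> = {f. f \<in> borel_measurable lborel \<and> integrable lborel (\<lambda>x. (f x)\<^sup>2) \<and>
     (\<exists>g :: real^'d \<Rightarrow> complex. g \<in> borel_measurable lborel \<and>
        set_integrable lborel (freq_cube \<eta>) (\<lambda>\<omega>. (norm (g \<omega>))\<^sup>2) \<and>
        (\<forall>x. complex_of_real (f x) =
           set_lebesgue_integral lborel (freq_cube \<eta>)
             (\<lambda>\<omega>. g \<omega> * exp (\<i> * complex_of_real (\<omega> \<bullet> x)))))}"

definition vote_set :: "nat \<Rightarrow> (nat \<Rightarrow> real) \<Rightarrow> real \<Rightarrow> (nat \<Rightarrow> real) \<Rightarrow> (nat \<Rightarrow> real) \<Rightarrow> real set" where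
  "vote_set K w \<tau> I1 I2 = {y. (\<Sum>k=1..K. w k * indicator {I1 k..I2 k} y) > \<tau>}"

end

theory Submission
  imports Defs
begin

text \<open>Let \<open>Z\<close> be the weighted fraction of regions \<open>C\<^sub>k\<close> that contain \<open>f\<^sub>*\<close>. Then
  \<open>Z \<le> 1\<close> and \<open>E Z \<ge> 1 - \<gamma>\<close>, so the reverse Markov inequality
  \<open>E Z \<le> 1/2 + 1/2 P(Z > 1/2)\<close> gives \<open>P(Z > 1/2) \<ge> 1 - 2\<gamma>\<close>. On the event \<open>Z > 1/2\<close>
  the bound holds at every input at once, because \<open>f\<^sub>* \<in> C\<^sub>k\<close> places \<open>f\<^sub>*(x)\<close> between
  the minimum and maximum over \<open>C\<^sub>k\<close> for every \<open>x\<close>.\<close>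

lemma (in prob_space) reverse_markov_inequality:
  fixes Z :: "'a \<Rightarrow> real"
  assumes "integrable M Z" and "\<And>\<omega>. \<omega> \<in> space M \<Longrightarrow> Z \<omega> \<le> 1"
  shows "expectation Z \<le> \<tau> + (1 - \<tau>) * prob {\<omega>\<in>space M. Z \<omega> > \<tau>}"
proof -
  define B where "B = {\<omega>\<in>space M. Z \<omega> > \<tau>}"
  have "B \<in> events"
    unfolding B_def using borel_measurable_integrable[OF assms(1)] by measurable
  then have integrable_bound: "integrable M (\<lambda>\<omega>. \<tau> + (1 - \<tau>) * indicator B \<omega>)"
    by (auto simp: integrable_indicator_iff less_top[symmetric])
  have "expectation Z \<le> expectation (\<lambda>\<omega>. \<tau> + (1 - \<tau>) * indicator B \<omega>)"
    using assms integrable_bound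
    by (intro integral_mono) (auto simp: B_def indicator_def not_less)
  also have "\<dots> = \<tau> + (1 - \<tau>) * prob B"
    using \<open>B \<in> events\<close> by (simp add: prob_space integrable_indicator_iff less_top[symmetric])
  finally show ?thesis unfolding B_def .
qed

lemma (in prob_space) weighted_vote_of_events:
  fixes w :: "'i \<Rightarrow> real"
  assumes "finite I" and "\<And>k. k \<in> I \<Longrightarrow> A k \<in> events"
    and "\<And>k. k \<in> I \<Longrightarrow> 0 \<le> w k" and "sum w I = 1"
    and "\<And>k. k \<in> I \<Longrightarrow> 1 - \<gamma> \<le> prob (A k)"
  shows "1 - \<gamma> \<le> \<tau> + (1 - \<tau>) * prob {\<omega>\<in>space M. (\<Sum>k\<in>I. w k * indicator (A k) \<omega>) > \<tau>}"
proof -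
  define Z where "Z \<omega> = (\<Sum>k\<in>I. w k * indicator (A k) \<omega>)" for \<omega>
  have integrable_indicators: "integrable M (indicator (A k) :: 'a \<Rightarrow> real)" if "k \<in> I" for k
    using assms(2)[OF that] by (simp add: integrable_indicator_iff less_top[symmetric])
  have "1 - \<gamma> = (\<Sum>k\<in>I. w k * (1 - \<gamma>))"
    using assms(4) by (simp add: sum_distrib_right[symmetric])
  also have "\<dots> \<le> (\<Sum>k\<in>I. w k * prob (A k))"
    using assms(3,5) by (intro sum_mono mult_left_mono) auto
  also have "\<dots> = expectation Z"
    unfolding Z_def using integrable_indicators assms(2) by (subst Bochner_Integration.integral_sum) auto
  also have "\<dots> \<le> \<tau> + (1 - \<tau>) * prob {\<omega>\<in>space M. Z \<omega> > \<tau>}"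
  proof (rule reverse_markov_inequality)
    show "integrable M Z"
      unfolding Z_def using integrable_indicators by auto
    have "Z \<omega> \<le> sum w I" for \<omega>
      unfolding Z_def using assms(3) by (intro sum_mono) (auto simp: indicator_def)
    then show "Z \<omega> \<le> 1" for \<omega>
      using assms(4) by simp
  qed
  finally show ?thesis unfolding Z_def .
qed

lemma eval_mem_Inf_Sup_interval:
  fixes S :: "('a \<Rightarrow> 'b::conditionally_complete_lattice) set"
  assumes "f \<in> S" and "\<exists>g\<in>S. \<forall>h\<in>S. g x \<le> h x" and "\<exists>g\<in>S. \<forall>h\<in>S. h x \<le> g x"
  shows "f x \<in> {Inf ((\<lambda>g. g x) ` S)..Sup ((\<lambda>g. g x) ` S)}"
proof -
  have "bdd_below ((\<lambda>g. g x) ` S)" and "bdd_above ((\<lambda>g. g x) ` S)"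
    using assms(2,3) by (auto intro: bdd_belowI bdd_aboveI)
  then show ?thesis
    using assms(1) by (auto intro: cInf_lower cSup_upper)
qed

lemma mem_vote_set_if_weighted_coverage_gt:
  assumes "\<And>k. k \<in> {1..K} \<Longrightarrow> 0 \<le> w k"
    and "\<And>k. k \<in> {1..K} \<Longrightarrow> \<omega> \<in> A k \<Longrightarrow> y \<in> {I1 k..I2 k}"
    and "\<tau> < (\<Sum>k=1..K. w k * indicator (A k) \<omega>)"
  shows "y \<in> vote_set K w \<tau> I1 I2"
proof -
  have "(\<Sum>k=1..K. w k * indicator (A k) \<omega>) \<le> (\<Sum>k=1..K. w k * indicator {I1 k..I2 k} y)"
    using assms(1,2) by (intro sum_mono mult_left_mono) (auto simp: indicator_def)
  then show ?thesis
    using assms(3) by (simp add: vote_set_def)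
qed

theorem mainTheorem2:
  fixes M :: "'o measure" and \<eta> \<gamma> :: real and K :: nat
    and fstar :: "real^'d \<Rightarrow> real"
    and C :: "nat \<Rightarrow> 'o \<Rightarrow> (real^'d \<Rightarrow> real) set"
    and w :: "nat \<Rightarrow> real"
  assumes "prob_space M"
    and "\<eta> > 0"
    and "fstar \<in> paley_wiener \<eta>"
    and "K \<ge> 2"
    and "0 < \<gamma>" and "\<gamma> < 1"
    and "\<forall>k\<in>{1..K}. \<forall>\<omega>\<in>space M. C k \<omega> \<subseteq> paley_wiener \<eta>"
    and "\<forall>k\<in>{1..K}. {\<omega>\<in>space M. fstar \<in> C k \<omega>} \<in> sets M"
    and "\<forall>k\<in>{1..K}. measure M {\<omega>\<in>space M. fstar \<in> C k \<omega>} \<ge> 1 - \<gamma>"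
    and "\<forall>k\<in>{1..K}. \<forall>\<omega>\<in>space M. \<forall>x. \<exists>f\<in>C k \<omega>. \<forall>g\<in>C k \<omega>. f x \<le> g x"
    and "\<forall>k\<in>{1..K}. \<forall>\<omega>\<in>space M. \<forall>x. \<exists>f\<in>C k \<omega>. \<forall>g\<in>C k \<omega>. g x \<le> f x"
    and "\<forall>k\<in>{1..K}. w k \<in> {0..1}"
    and "(\<Sum>k=1..K. w k) = 1"
    and "{\<omega>\<in>space M. \<forall>x0. fstar x0 \<in> vote_set K w (1/2)
            (\<lambda>k. Inf ((\<lambda>f. f x0) ` C k \<omega>)) (\<lambda>k. Sup ((\<lambda>f. f x0) ` C k \<omega>))} \<in> sets M"
  shows "measure M {\<omega>\<in>space M. \<forall>x0. fstar x0 \<in> vote_set K w (1/2)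
            (\<lambda>k. Inf ((\<lambda>f. f x0) ` C k \<omega>)) (\<lambda>k. Sup ((\<lambda>f. f x0) ` C k \<omega>))} \<ge> 1 - 2 * \<gamma>"
proof -
  interpret prob_space M by (rule assms(1))
  define A where "A k = {\<omega>\<in>space M. fstar \<in> C k \<omega>}" for k
  define B where "B = {\<omega>\<in>space M. (\<Sum>k=1..K. w k * indicator (A k) \<omega>) > 1/2}"
  have "1 - \<gamma> \<le> 1/2 + (1 - 1/2) * prob B"
    unfolding B_def A_def using assms(8,9,12,13)
    by (intro weighted_vote_of_events) auto
  moreover have "B \<subseteq> {\<omega>\<in>space M. \<forall>x0. fstar x0 \<in> vote_set K w (1/2)
            (\<lambda>k. Inf ((\<lambda>f. f x0) ` C k \<omega>)) (\<lambda>k. Sup ((\<lambda>f. f x0) ` C k \<omega>))}"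
    using assms(10,11,12) unfolding B_def
    by (auto intro!: mem_vote_set_if_weighted_coverage_gt eval_mem_Inf_Sup_interval
        simp: A_def)
  then have "prob B \<le> measure M {\<omega>\<in>space M. \<forall>x0. fstar x0 \<in> vote_set K w (1/2)
            (\<lambda>k. Inf ((\<lambda>f. f x0) ` C k \<omega>)) (\<lambda>k. Sup ((\<lambda>f. f x0) ` C k \<omega>))}"
    using assms(14) by (rule finite_measure_mono)
  ultimately show ?thesis by simp
qed

end
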